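(* Let $X_1,X_2$ be independent real random variables with densities $f_{X_1},f_{X_2}$ that are symmetric about their means $\mu_1,\mu_2$ and positive on all of $\mathbb{R}$, and let $\Theta$ be a $[0,1]$-valued random variable with density $\pi$, independent of $(X_1,X_2)$. Let $\psi:[0,1]\to[n]$ be any preference disclosure policy and $M=\psi(\Theta)$. Suppose the platform uses a weighted-quadratic disclosure (WQD) policy $\gamma$ with weights $w_1,\dots,w_n\in[0,1]$, let $S=\gamma(M,X_1,X_2)$ and let the signal be $Y=(S,X_S)$. Then the equilibrium estimation policy $\eta^\star$ (the Bayes-consistent estimator $\eta^\star(y,m)=(\mathbf{E}[X_1\mid M=m,Y=y],\,\mathbf{E}[X_2\mid M=m,Y=y])$, wherever these conditional expectations are defined) is $$\eta^\star(y,m)=\begin{cases}(x_1,\mu_2), & \text{if } y=(1,x_1),\\ (\mu_1,x_2), & \text{if } y=(2,x_2).\end{cases}$$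
   Context: $[n]=\{1,\dots,n\}$ for a positive integer $n$. The receiver observes $\Theta=\theta$ and sends the message $m=\psi(\theta)\in[n]$. The platform observes $(m,x_1,x_2)$ and chooses $s=\gamma(m,x_1,x_2)\in\{1,2\}$; the receiver then observes $y=(1,x_1)$ if $s=1$ and $y=(2,x_2)$ if $s=2$. A WQD policy with weights $w_1,\dots,w_n\in[0,1]$ is the policy $\gamma(m,x_1,x_2)=1$ if $w_m(x_1-\mu_1)^2>(1-w_m)(x_2-\mu_2)^2$, and $\gamma(m,x_1,x_2)=2$ otherwise. *)

theory Defs
  imports "HOL-Probability.Probability"
begin

definition wqd :: "(nat \<Rightarrow> real) \<Rightarrow> real \<Rightarrow> real \<Rightarrow> nat \<Rightarrow> real \<Rightarrow> real \<Rightarrow> nat" where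
  "wqd w mu1 mu2 m x1 x2 =
     (if w m * (x1 - mu1)^2 > (1 - w m) * (x2 - mu2)^2 then 1 else 2)"

definition signal :: "nat \<Rightarrow> real \<Rightarrow> real \<Rightarrow> nat \<times> real" where
  "signal s x1 x2 = (s, if s = 1 then x1 else x2)"

definition eta_star :: "real \<Rightarrow> real \<Rightarrow> nat \<times> real \<Rightarrow> nat \<Rightarrow> real \<times> real" where
  "eta_star mu1 mu2 y m = (if fst y = 1 then (snd y, mu2) else (mu1, snd y))"

end

theory Submission
  imports Defs
begin

text \<open>The revealed coordinate is observed exactly, so only the hidden one needs an argument.
  Say \<open>X\<^sub>1\<close> is hidden. The WQD rule sees \<open>X\<^sub>1\<close> only through \<open>(X\<^sub>1 - \<mu>\<^sub>1)\<^sup>2\<close>, so every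
  observable event on which \<open>X\<^sub>1\<close> is hidden is invariant under the reflection
  \<open>X\<^sub>1 \<mapsto> 2\<mu>\<^sub>1 - X\<^sub>1\<close> with \<open>(X\<^sub>2, \<Theta>)\<close> fixed. As \<open>X\<^sub>1\<close> is independent of \<open>(X\<^sub>2, \<Theta>)\<close> and its density is
  symmetric about \<open>\<mu>\<^sub>1\<close>, the reflection preserves the joint law, hence \<open>X\<^sub>1 - \<mu>\<^sub>1\<close> integrates to
  zero over each such event, i.e. the conditional mean of \<open>X\<^sub>1\<close> there is \<open>\<mu>\<^sub>1\<close>.\<close>

lemma lborel_integral_odd:
  fixes h :: "real \<Rightarrow> 'a::{banach, second_countable_topology}"
  assumes odd: "\<And>t. h (c + t) = - h (c - t)"
  shows "(\<integral>x. h x \<partial>lborel) = 0"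
proof -
  have "(\<integral>x. h x \<partial>lborel) = \<bar>-1\<bar> *\<^sub>R (\<integral>x. h (2 * c + (-1) * x) \<partial>lborel)"
    by (rule lborel_integral_real_affine) simp
  also have "\<dots> = (\<integral>x. - h x \<partial>lborel)"
    using odd[of "c - _"] by simp
  finally have "(\<integral>x. h x \<partial>lborel) = - (\<integral>x. h x \<partial>lborel)"
    by simp
  then show ?thesis
    by (simp add: eq_neg_iff_add_eq_0 flip: scaleR_2)
qed

lemma integral_symmetric_density_odd:
  fixes f g :: "real \<Rightarrow> real"
  assumes [measurable]: "f \<in> borel_measurable borel" "g \<in> borel_measurable borel"
    and f_nonneg: "\<And>x. 0 \<le> f x"
    and f_symmetric: "\<And>t. f (c + t) = f (c - t)"
    and g_odd: "\<And>t. g (c + t) = - g (c - t)"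
  shows "(\<integral>x. g x \<partial>density lborel (\<lambda>x. ennreal (f x))) = 0"
proof -
  have "(\<integral>x. g x \<partial>density lborel (\<lambda>x. ennreal (f x))) = (\<integral>x. f x * g x \<partial>lborel)"
    using f_nonneg by (subst integral_density) auto
  also have "\<dots> = 0"
    by (rule lborel_integral_odd[where c = c]) (simp add: f_symmetric g_odd)
  finally show ?thesis .
qed

lemma integral_indep_vars_odd_coordinate:
  fixes P :: "'a measure" and Xs :: "'i \<Rightarrow> 'a \<Rightarrow> real" and phi :: "('i \<Rightarrow> real) \<Rightarrow> real"
  assumes P: "prob_space P"
    and Xs: "\<And>i. Xs i \<in> borel_measurable P"
    and I: "finite I" "j \<in> I"
    and indep: "prob_space.indep_vars P (\<lambda>_. borel) Xs I"
    and density: "distributed P lborel (Xs j) (\<lambda>x. ennreal (f x))"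
    and f_nonneg: "\<And>x. 0 \<le> f x"
    and f_symmetric: "\<And>t. f (c + t) = f (c - t)"
    and phi: "phi \<in> borel_measurable (PiM I (\<lambda>_. borel))"
    and phi_integrable: "integrable P (\<lambda>\<omega>. phi (\<lambda>i\<in>I. Xs i \<omega>))"
    and phi_odd: "\<And>x t. phi (x(j := c + t)) = - phi (x(j := c - t))"
  shows "(\<integral>\<omega>. phi (\<lambda>i\<in>I. Xs i \<omega>) \<partial>P) = 0"
proof -
  interpret prob_space P by (rule P)
  define Z where "Z = (\<lambda>\<omega>. \<lambda>i\<in>I. Xs i \<omega>)"
  define D where "D = (\<lambda>i. distr P borel (Xs i))"
  interpret D: product_sigma_finite D
    unfolding product_sigma_finite_def D_def
    using prob_space_distr[OF Xs] prob_space_imp_sigma_finite by blast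
  have Z: "Z \<in> P \<rightarrow>\<^sub>M PiM I (\<lambda>_. borel)"
    unfolding Z_def using Xs by (intro measurable_restrict) auto
  have law_Z: "distr P (PiM I (\<lambda>_. borel)) Z = PiM I D"
    using indep_vars_iff_distr_eq_PiM'[where I = I and M' = "\<lambda>_. borel" and X = Xs] I indep Xs
    by (auto simp: Z_def D_def)
  have phi_D: "phi \<in> borel_measurable (PiM I D)"
    using phi measurable_cong_sets[OF sets_PiM_cong[OF refl] refl] by (simp add: D_def)
  have "integrable (PiM I D) phi"
    using phi_integrable integrable_distr_eq[OF Z phi] law_Z by (simp add: Z_def)
  then have "integrable (PiM (insert j (I - {j})) D) phi"
    using I by (simp add: insert_absorb)
  have "(\<integral>\<omega>. phi (Z \<omega>) \<partial>P) = (\<integral>x. phi x \<partial>PiM (insert j (I - {j})) D)"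
    using integral_distr[OF Z phi] law_Z I by (simp add: insert_absorb)
  also have "\<dots> = (\<integral>x. (\<integral>y. phi (x(j := y)) \<partial>D j) \<partial>PiM (I - {j}) D)"
    by (rule D.product_integral_insert) (use I \<open>integrable (PiM (insert j (I - {j})) D) phi\<close> in auto)
  also have "\<dots> = (\<integral>x. 0 \<partial>PiM (I - {j}) D)"
  proof (rule Bochner_Integration.integral_cong[OF refl])
    fix x assume x: "x \<in> space (PiM (I - {j}) D)"
    have "(\<lambda>y. x(j := y)) \<in> D j \<rightarrow>\<^sub>M PiM I D"
      using measurable_component_update[OF x, of j] I by (simp add: insert_absorb)
    then have "(\<lambda>y. phi (x(j := y))) \<in> borel_measurable borel"
      using measurable_comp[OF _ phi_D] by (simp add: comp_def D_def)
    moreover have "f \<in> borel_measurable borel"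
      using distributed_borel_measurable[OF density] f_nonneg by simp
    ultimately have "(\<integral>y. phi (x(j := y)) \<partial>density lborel (\<lambda>x. ennreal (f x))) = 0"
      using f_nonneg f_symmetric phi_odd by (intro integral_symmetric_density_odd)
    moreover have "D j = density lborel (\<lambda>x. ennreal (f x))"
      unfolding D_def distributed_distr_eq_density[OF density, symmetric]
      by (rule distr_cong) auto
    ultimately show "(\<integral>y. phi (x(j := y)) \<partial>D j) = 0"
      by simp
  qed
  finally show ?thesis
    by (simp add: Z_def)
qed

lemma real_cond_exp_revealed_else_center:
  fixes P :: "'a measure" and Xs :: "'i \<Rightarrow> 'a \<Rightarrow> real" and obs :: "('i \<Rightarrow> real) \<Rightarrow> 'b"
    and revealed :: "('i \<Rightarrow> real) \<Rightarrow> bool" and k :: "'b \<Rightarrow> real"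
  assumes P: "prob_space P"
    and Xs: "\<And>i. Xs i \<in> borel_measurable P"
    and I: "finite I" "j \<in> I"
    and indep: "prob_space.indep_vars P (\<lambda>_. borel) Xs I"
    and density: "distributed P lborel (Xs j) (\<lambda>x. ennreal (f x))"
    and f_nonneg: "\<And>x. 0 \<le> f x"
    and f_symmetric: "\<And>t. f (c + t) = f (c - t)"
    and Xj_integrable: "integrable P (Xs j)"
    and obs[measurable]: "obs \<in> PiM I (\<lambda>_. borel) \<rightarrow>\<^sub>M N"
    and revealed[measurable]: "Measurable.pred (PiM I (\<lambda>_. borel)) revealed"
    and revealed_reflect: "\<And>x t. revealed (x(j := c + t)) \<longleftrightarrow> revealed (x(j := c - t))"
    and hidden_reflect:
      "\<And>x t. \<not> revealed (x(j := c + t)) \<Longrightarrow> obs (x(j := c + t)) = obs (x(j := c - t))"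
    and k[measurable]: "k \<in> borel_measurable N"
    and k_obs: "\<And>z. k (obs z) = (if revealed z then z j else c)"
  shows "AE \<omega> in P.
           real_cond_exp P (vimage_algebra (space P) (\<lambda>\<omega>. obs (\<lambda>i\<in>I. Xs i \<omega>)) N) (Xs j) \<omega>
             = k (obs (\<lambda>i\<in>I. Xs i \<omega>))"
proof -
  interpret prob_space P by (rule P)
  define Z where "Z = (\<lambda>\<omega>. \<lambda>i\<in>I. Xs i \<omega>)"
  define G where "G = (\<lambda>\<omega>. obs (Z \<omega>))"
  define F where "F = vimage_algebra (space P) G N"
  note I(2)[simp]
  have [measurable]: "Z \<in> P \<rightarrow>\<^sub>M PiM I (\<lambda>_. borel)"
    unfolding Z_def using Xs by (intro measurable_restrict) auto
  have G[measurable]: "G \<in> P \<rightarrow>\<^sub>M N"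
    unfolding G_def by measurable
  have G_space: "G \<in> space P \<rightarrow> space N"
    using measurable_space[OF G] by blast
  have sets_F: "sets F = {G -` B \<inter> space P | B. B \<in> sets N}"
    unfolding F_def by (rule sets_vimage_algebra2[OF G_space])
  interpret F: finite_measure_subalgebra P F
  proof
    show "subalgebra P F"
      unfolding subalgebra_def sets_F using G by (auto simp: F_def)
  qed
  have "G \<in> F \<rightarrow>\<^sub>M N"
    unfolding F_def by (rule measurable_vimage_algebra1[OF G_space])
  then have kG_F: "(\<lambda>\<omega>. k (G \<omega>)) \<in> borel_measurable F"
    by measurable
  have Z_j: "Z \<omega> j = Xs j \<omega>" for \<omega>
    using I by (simp add: Z_def)
  have kG: "k (G \<omega>) = (if revealed (Z \<omega>) then Xs j \<omega> else c)" for \<omega>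
    by (simp add: G_def k_obs Z_j)
  have kG_integrable: "integrable P (\<lambda>\<omega>. k (G \<omega>))"
    by (rule Bochner_Integration.integrable_bound[where f = "\<lambda>\<omega>. \<bar>Xs j \<omega>\<bar> + \<bar>c\<bar>"])
      (use Xj_integrable in \<open>auto simp: kG\<close>)
  have "AE \<omega> in P. real_cond_exp P F (Xs j) \<omega> = k (G \<omega>)"
  proof (rule F.real_cond_exp_charact)
    fix A assume "A \<in> sets F"
    then obtain B where [measurable]: "B \<in> sets N" and A: "A = G -` B \<inter> space P"
      using sets_F by auto
    define phi where "phi = (\<lambda>z. if obs z \<in> B \<and> \<not> revealed z then z j - c else 0)"
    have phi[measurable]: "phi \<in> borel_measurable (PiM I (\<lambda>_. borel))"
      unfolding phi_def by measurable
    have "integrable P (\<lambda>\<omega>. phi (Z \<omega>))"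
    proof (rule Bochner_Integration.integrable_bound[where f = "\<lambda>\<omega>. Xs j \<omega> - c"])
      show "AE \<omega> in P. norm (phi (Z \<omega>)) \<le> norm (Xs j \<omega> - c)"
        by (simp add: phi_def Z_j)
    qed (use Xj_integrable in auto)
    then have phi_Z: "(\<integral>\<omega>. phi (Z \<omega>) \<partial>P) = 0"
      unfolding Z_def
    proof (rule integral_indep_vars_odd_coordinate[OF P Xs I indep density f_nonneg f_symmetric phi])
      show "phi (x(j := c + t)) = - phi (x(j := c - t))" for x t
        using revealed_reflect[of x t] hidden_reflect[of x t] by (auto simp: phi_def)
    qed
    have A_sets: "A \<in> sets P"
      unfolding A by measurable
    have "(\<integral>\<omega>. indicator A \<omega> * Xs j \<omega> \<partial>P) - (\<integral>\<omega>. indicator A \<omega> * k (G \<omega>) \<partial>P)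
        = (\<integral>\<omega>. indicator A \<omega> * Xs j \<omega> - indicator A \<omega> * k (G \<omega>) \<partial>P)"
      using integrable_mult_indicator[OF A_sets Xj_integrable]
        integrable_mult_indicator[OF A_sets kG_integrable]
      by (simp add: integral_diff)
    also have "\<dots> = (\<integral>\<omega>. phi (Z \<omega>) \<partial>P)"
      by (rule Bochner_Integration.integral_cong)
        (auto simp: A G_def k_obs phi_def Z_j indicator_def)
    finally show "(\<integral>\<omega>\<in>A. Xs j \<omega> \<partial>P) = (\<integral>\<omega>\<in>A. k (G \<omega>) \<partial>P)"
      by (simp add: phi_Z set_lebesgue_integral_def)
  qed (use Xj_integrable kG_integrable kG_F in auto)
  then show ?thesis
    by (simp add: F_def G_def Z_def)
qed

theorem proposition1:
  fixes P :: "'a measure"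
    and X1 X2 Th :: "'a \<Rightarrow> real"
    and f1 f2 pi :: "real \<Rightarrow> real"
    and mu1 mu2 :: real
    and n :: nat
    and psi :: "real \<Rightarrow> nat"
    and w :: "nat \<Rightarrow> real"
  assumes "prob_space P"
    and "distributed P lborel X1 (\<lambda>x. ennreal (f1 x))"
    and "distributed P lborel X2 (\<lambda>x. ennreal (f2 x))"
    and "\<And>x. f1 x > 0" and "\<And>x. f2 x > 0"
    and "\<And>t. f1 (mu1 + t) = f1 (mu1 - t)"
    and "\<And>t. f2 (mu2 + t) = f2 (mu2 - t)"
    and "integrable P X1" and "integrable P X2"
    and "prob_space.expectation P X1 = mu1"
    and "prob_space.expectation P X2 = mu2"
    and "distributed P lborel Th (\<lambda>x. ennreal (pi x))"
    and "\<And>\<omega>. \<omega> \<in> space P \<Longrightarrow> Th \<omega> \<in> {0..1}"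
    and "prob_space.indep_vars P (\<lambda>i. borel)
           (\<lambda>i::nat. if i = 0 then X1 else if i = 1 then X2 else Th) {0, 1, 2}"
    and "psi \<in> borel \<rightarrow>\<^sub>M count_space UNIV"
    and "\<And>\<theta>. \<theta> \<in> {0..1} \<Longrightarrow> psi \<theta> \<in> {1..n}"
    and "\<And>m. m \<in> {1..n} \<Longrightarrow> w m \<in> {0..1}"
  shows
    "let M = (\<lambda>\<omega>. psi (Th \<omega>));
         S = (\<lambda>\<omega>. wqd w mu1 mu2 (M \<omega>) (X1 \<omega>) (X2 \<omega>));
         Y = (\<lambda>\<omega>. signal (S \<omega>) (X1 \<omega>) (X2 \<omega>));
         F = vimage_algebra (space P) (\<lambda>\<omega>. (M \<omega>, Y \<omega>))
               (count_space UNIV \<Otimes>\<^sub>M (count_space UNIV \<Otimes>\<^sub>M borel))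
     in AE \<omega> in P. (real_cond_exp P F X1 \<omega>, real_cond_exp P F X2 \<omega>)
                    = eta_star mu1 mu2 (Y \<omega>) (M \<omega>)"
proof -
  define Xs where "Xs = (\<lambda>i::nat. if i = 0 then X1 else if i = 1 then X2 else Th)"
  define obs where "obs = (\<lambda>z::nat \<Rightarrow> real.
    (psi (z 2), signal (wqd w mu1 mu2 (psi (z 2)) (z 0) (z 1)) (z 0) (z 1)))"
  define N :: "(nat \<times> nat \<times> real) measure"
    where "N = count_space UNIV \<Otimes>\<^sub>M (count_space UNIV \<Otimes>\<^sub>M borel)"
  define F where "F = vimage_algebra (space P) (\<lambda>\<omega>. obs (\<lambda>i\<in>{0, 1, 2}. Xs i \<omega>)) N"
  define eta where "eta = (\<lambda>p::nat \<times> nat \<times> real. eta_star mu1 mu2 (snd p) (fst p))"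
  have Xs: "Xs i \<in> borel_measurable P" for i
    using assms(2,3,12)[THEN distributed_measurable] by (simp add: Xs_def)
  have [measurable]: "psi \<in> borel \<rightarrow>\<^sub>M count_space UNIV"
    by (rule assms(15))
  have obs: "obs \<in> PiM {0, 1, 2} (\<lambda>_. borel) \<rightarrow>\<^sub>M N"
    unfolding obs_def N_def wqd_def signal_def by measurable
  have eta_fst: "(\<lambda>p. fst (eta p)) \<in> borel_measurable N"
    by (simp only: eta_def eta_star_def N_def if_distrib fst_conv) measurable
  have eta_snd: "(\<lambda>p. snd (eta p)) \<in> borel_measurable N"
    by (simp only: eta_def eta_star_def N_def if_distrib snd_conv) measurable
  have cond_X1:
    "AE \<omega> in P. real_cond_exp P F (Xs 0) \<omega> = fst (eta (obs (\<lambda>i\<in>{0, 1, 2}. Xs i \<omega>)))"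
    unfolding F_def
    by (rule real_cond_exp_revealed_else_center[where f = f1 and c = mu1
          and revealed = "\<lambda>z. wqd w mu1 mu2 (psi (z 2)) (z 0) (z 1) = 1",
          OF assms(1) Xs _ _ assms(14)[folded Xs_def] _ _ _ _ obs _ _ _ eta_fst])
      (use assms(2,4,6,8) in
        \<open>auto simp: Xs_def less_imp_le wqd_def obs_def eta_def eta_star_def signal_def\<close>)
  have cond_X2:
    "AE \<omega> in P. real_cond_exp P F (Xs 1) \<omega> = snd (eta (obs (\<lambda>i\<in>{0, 1, 2}. Xs i \<omega>)))"
    unfolding F_def
    by (rule real_cond_exp_revealed_else_center[where f = f2 and c = mu2
          and revealed = "\<lambda>z. wqd w mu1 mu2 (psi (z 2)) (z 0) (z 1) \<noteq> 1",
          OF assms(1) Xs _ _ assms(14)[folded Xs_def] _ _ _ _ obs _ _ _ eta_snd])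
      (use assms(3,5,7,9) in
        \<open>auto simp: Xs_def less_imp_le wqd_def obs_def eta_def eta_star_def signal_def\<close>)
  have "AE \<omega> in P. (real_cond_exp P F X1 \<omega>, real_cond_exp P F X2 \<omega>)
                    = eta (obs (\<lambda>i\<in>{0, 1, 2}. Xs i \<omega>))"
    using cond_X1 cond_X2 by eventually_elim (simp add: prod_eq_iff Xs_def)
  moreover have "obs (\<lambda>i\<in>{0, 1, 2}. Xs i \<omega>)
      = (psi (Th \<omega>), signal (wqd w mu1 mu2 (psi (Th \<omega>)) (X1 \<omega>) (X2 \<omega>)) (X1 \<omega>) (X2 \<omega>))" for \<omega>
    by (simp add: obs_def Xs_def)
  ultimately show ?thesis
    by (simp add: Let_def F_def N_def eta_def)
qed

end
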